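(* For every linear-time property $\varphi$ over a finite alphabet $\Sigma$ and every bound $n \in \mathbb{N}$, there is a deterministic safety automaton $\mathcal{A}$ with $O(|\Sigma|^n \cdot 2^{n \log n})$ states such that $L(\mathcal{A})$ is an $n$-lasso-precise underapproximation of $\varphi$, i.e., $L(\mathcal{A}) \subseteq \varphi$ and $L_n(L(\mathcal{A})) = L_n(\varphi)$.
   Context: A linear-time property over $\Sigma$ is a set $\varphi \subseteq \Sigma^\omega$. A lasso of length $n$ is a pair $(u,v)$ with $u\in\Sigma^*$, $v\in\Sigma^+$, $|u\cdot v|=n$, inducing the word $u\cdot v^\omega$. For a property $\psi$, $L_n(\psi)=\{u\cdot v^\omega \in \psi \mid u\in\Sigma^*, v\in\Sigma^+, |u\cdot v|=n\}$. A property $\varphi'$ is an $n$-lasso-precise underapproximation of $\varphi$ if $\varphi'\subseteq\varphi$ and $L_n(\varphi')=L_n(\varphi)$. A nondeterministic parity automaton over $\Sigma$ is $\mathcal{A}=(Q,Q_0,\delta,\mu)$ with finite state set $Q$, initial states $Q_0\subseteq Q$, transition function $\delta: Q\times\Sigma\to\mathcal{P}(Q)$, and coloring $\mu: Q\to C$ for a finite $C\subset\mathbb{N}$. A run on $\alpha_1\alpha_2\cdots$ is a sequence $q_0q_1\cdots$ with $q_0\in Q_0$ and $q_{i+1}\in\delta(q_i,\alpha_{i+1})$; it is accepting if the highest color occurring infinitely often in $\mu(q_0)\mu(q_1)\cdots$ is even; $L(\mathcal{A})$ is the set of words with an accepting run. The automaton is deterministic if $|Q_0|=1$ and $|\delta(q,\alpha)|\le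 1$ for all $q,\alpha$ (missing successors allowed). A safety automaton is one where all states have color $0$, so every infinite run is accepting. The size of an automaton is its number of states. *)

theory Defs
  imports Complex_Main
begin

definition omega_words :: "'a set \<Rightarrow> (nat \<Rightarrow> 'a) set" where
  "omega_words \<Sigma> = {w. \<forall>i. w i \<in> \<Sigma>}"

definition lasso_word :: "'a list \<Rightarrow> 'a list \<Rightarrow> nat \<Rightarrow> 'a" where
  "lasso_word u v i = (if i < length u then u ! i else v ! ((i - length u) mod length v))"

definition lasso_lang :: "'a set \<Rightarrow> nat \<Rightarrow> (nat \<Rightarrow> 'a) set \<Rightarrow> (nat \<Rightarrow> 'a) set" where
  "lasso_lang \<Sigma> n \<psi> = {lasso_word u v | u v. set u \<subseteq> \<Sigma> \<and> set v \<subseteq> \<Sigma> \<and> v \<noteq> [] \<and>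
      length (u @ v) = n \<and> lasso_word u v \<in> \<psi>}"

definition lasso_precise_under :: "'a set \<Rightarrow> nat \<Rightarrow> (nat \<Rightarrow> 'a) set \<Rightarrow> (nat \<Rightarrow> 'a) set \<Rightarrow> bool" where
  "lasso_precise_under \<Sigma> n \<phi>' \<phi> \<longleftrightarrow> \<phi>' \<subseteq> \<phi> \<and> lasso_lang \<Sigma> n \<phi>' = lasso_lang \<Sigma> n \<phi>"

record 'a npa =
  states :: "nat set"
  init :: "nat set"
  trans :: "nat \<Rightarrow> 'a \<Rightarrow> nat set"
  color :: "nat \<Rightarrow> nat"

definition wf_npa :: "'a set \<Rightarrow> 'a npa \<Rightarrow> bool" where
  "wf_npa \<Sigma> A \<longleftrightarrow> finite (states A) \<and> init A \<subseteq> states A \<and>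
     (\<forall>q \<in> states A. \<forall>a \<in> \<Sigma>. trans A q a \<subseteq> states A)"

definition is_run :: "'a npa \<Rightarrow> (nat \<Rightarrow> 'a) \<Rightarrow> (nat \<Rightarrow> nat) \<Rightarrow> bool" where
  "is_run A w r \<longleftrightarrow> r 0 \<in> init A \<and> (\<forall>i. r (Suc i) \<in> trans A (r i) (w i))"

definition accepting_run :: "'a npa \<Rightarrow> (nat \<Rightarrow> nat) \<Rightarrow> bool" where
  "accepting_run A r \<longleftrightarrow>
     (\<exists>k. even k \<and> (\<exists>\<^sub>\<infinity> i. color A (r i) = k) \<and>
          (\<forall>k'. k < k' \<longrightarrow> \<not> (\<exists>\<^sub>\<infinity> i. color A (r i) = k')))"

definition lang :: "'a set \<Rightarrow> 'a npa \<Rightarrow> (nat \<Rightarrow> 'a) set" where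
  "lang \<Sigma> A = {w \<in> omega_words \<Sigma>. \<exists>r. is_run A w r \<and> accepting_run A r}"

definition deterministic :: "'a set \<Rightarrow> 'a npa \<Rightarrow> bool" where
  "deterministic \<Sigma> A \<longleftrightarrow> card (init A) = 1 \<and>
     (\<forall>q \<in> states A. \<forall>a \<in> \<Sigma>. card (trans A q a) \<le> 1)"

definition safety :: "'a npa \<Rightarrow> bool" where
  "safety A \<longleftrightarrow> (\<forall>q \<in> states A. color A q = 0)"

definition size_npa :: "'a npa \<Rightarrow> nat" where
  "size_npa A = card (states A)"

end

theory Submission
  imports Defs "HOL-Library.Omega_Words_Fun"
begin

text \<open>L_n(\<phi>) is a finite set S of lasso words, and a finite set of infinite words is a safety
  language: it is recognised by the deterministic automaton whose states are its nonempty
  residuals (left quotients). Two lasso words of length n that agree on their first n + n * n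
  letters are equal, so after a prefix of that length at most one word of S is left, and the
  residual is one of the first n suffixes of a word of S. Hence S has at most
  1 + |S| (n * n + 2 n) residuals, while |S| \<le> n |\<Sigma>|^n.\<close>

definition residual :: "(nat \<Rightarrow> 'a) set \<Rightarrow> 'a list \<Rightarrow> (nat \<Rightarrow> 'a) set" where
  "residual S x = {suffix (length x) w | w. w \<in> S \<and> prefix (length x) w = x}"

lemma residual_Nil [simp]: "residual S [] = S"
  by (simp add: residual_def)

lemma residual_empty [simp]: "residual {} x = {}"
  by (simp add: residual_def)

lemma prefix_eq_iff: "prefix k w = prefix k w' \<longleftrightarrow> (\<forall>i<k. w i = w' i)"
  by (auto simp: subsequence_def map_eq_conv)

lemma prefix_add: "prefix (i + j) w = prefix i w @ prefix j (suffix i w)"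
  by (simp add: subsequence_append subsequence_prefix_suffix)

lemma suffix_in_residual: "w \<in> S \<Longrightarrow> suffix i w \<in> residual S (prefix i w)"
  unfolding residual_def by auto

lemma residual_append [simp]: "residual (residual S x) y = residual S (x @ y)"
proof (intro equalityI subsetI)
  fix z assume "z \<in> residual (residual S x) y"
  then obtain w where "w \<in> S" "prefix (length x) w = x" "prefix (length y) (suffix (length x) w) = y"
      and "z = suffix (length y) (suffix (length x) w)"
    unfolding residual_def by auto
  then show "z \<in> residual S (x @ y)"
    unfolding residual_def by (auto simp: prefix_add)
next
  fix z assume "z \<in> residual S (x @ y)"
  then obtain w where w: "w \<in> S" "prefix (length x + length y) w = x @ y"
      and z: "z = suffix (length x + length y) w"
    unfolding residual_def by auto
  have "prefix (length x) w = x" "prefix (length y) (suffix (length x) w) = y"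
    using w(2) by (simp_all add: prefix_add)
  moreover have "suffix (length x) w \<in> residual S x"
    using w(1) \<open>prefix (length x) w = x\<close> unfolding residual_def by auto
  ultimately show "z \<in> residual (residual S x) y"
    using z unfolding residual_def[of "residual S x"] by (auto intro!: exI[of _ "suffix (length x) w"])
qed

text \<open>If w \<notin> S, then beyond the last position at which some word of S first differs from w,
  no prefix of w extends into S.\<close>
lemma finite_word_set_closed:
  assumes "finite S" and prefixes: "\<And>i. residual S (prefix i w) \<noteq> {}"
  shows "w \<in> S"
proof (rule ccontr)
  assume "w \<notin> S"
  then have "\<forall>w'\<in>S. \<exists>d. w' d \<noteq> w d" by (metis ext)
  then obtain d where d: "\<And>w'. w' \<in> S \<Longrightarrow> w' (d w') \<noteq> w (d w')" by metis
  obtain k where k: "d ` S \<subseteq> {..<k}"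
    using finite_nat_bounded[OF finite_imageI[OF \<open>finite S\<close>]] by blast
  have "prefix k w' \<noteq> prefix k w" if "w' \<in> S" for w'
  proof
    assume "prefix k w' = prefix k w"
    then have "w' (d w') = w (d w')" using k that by (auto simp: prefix_eq_iff)
    with d that show False by blast
  qed
  then have "residual S (prefix k w) = {}" unfolding residual_def by auto
  with prefixes show False by blast
qed

definition residual_states :: "(nat \<Rightarrow> 'a) set \<Rightarrow> (nat \<Rightarrow> 'a) set set" where
  "residual_states S = insert S {residual S x | x. residual S x \<noteq> {}}"

lemma residual_in_residual_states:
  "residual S x \<noteq> {} \<Longrightarrow> residual S x \<in> residual_states S"
  unfolding residual_states_def by blast

lemma residual_states_step:
  assumes "R \<in> residual_states S" "residual R [a] \<noteq> {}"
  shows "residual R [a] \<in> residual_states S"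
proof -
  obtain x where "R = residual S x"
    using assms(1) residual_Nil unfolding residual_states_def by blast
  with assms(2) show ?thesis
    by (simp add: residual_in_residual_states)
qed

text \<open>The states are the residuals of S, encoded as numbers by f. Transitions into the empty
  residual are omitted, which is why the safety acceptance condition suffices.\<close>
definition residual_dsa :: "((nat \<Rightarrow> 'a) set \<Rightarrow> nat) \<Rightarrow> (nat \<Rightarrow> 'a) set \<Rightarrow> 'a npa" where
  "residual_dsa f S =
     \<lparr>states = f ` residual_states S,
      init = {f S},
      trans = (\<lambda>q a. let R = inv_into (residual_states S) f q in
        if q \<in> f ` residual_states S \<and> residual R [a] \<noteq> {} then {f (residual R [a])} else {}),
      color = (\<lambda>_. 0)\<rparr>"

lemma trans_residual_dsa:
  assumes "inj_on f (residual_states S)" "R \<in> residual_states S"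
  shows "trans (residual_dsa f S) (f R) a =
    (if residual R [a] \<noteq> {} then {f (residual R [a])} else {})"
  using assms by (simp add: residual_dsa_def)

lemma wf_residual_dsa:
  assumes "finite (residual_states S)"
  shows "wf_npa \<Sigma> (residual_dsa f S)"
proof -
  have "S \<in> residual_states S"
    unfolding residual_states_def by blast
  moreover have "trans (residual_dsa f S) q a \<subseteq> f ` residual_states S"
    if "q \<in> f ` residual_states S" for q a
    using residual_states_step[OF inv_into_into[OF that]]
    by (auto simp: residual_dsa_def Let_def)
  ultimately show ?thesis
    using assms unfolding wf_npa_def by (simp add: residual_dsa_def)
qed

lemma deterministic_residual_dsa: "deterministic \<Sigma> (residual_dsa f S)"
  unfolding deterministic_def residual_dsa_def by (simp add: Let_def)

lemma safety_residual_dsa: "safety (residual_dsa f S)"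
  unfolding safety_def residual_dsa_def by simp

lemma size_residual_dsa:
  "inj_on f (residual_states S) \<Longrightarrow> size_npa (residual_dsa f S) = card (residual_states S)"
  unfolding size_npa_def residual_dsa_def by (simp add: card_image)

lemma run_residual_dsa:
  assumes "inj_on f (residual_states S)" "w \<in> S"
  shows "is_run (residual_dsa f S) w (\<lambda>i. f (residual S (prefix i w)))"
proof -
  have "residual S (prefix i w) \<in> residual_states S" for i
    using suffix_in_residual[OF assms(2)] by (blast intro: residual_in_residual_states)
  moreover have "residual S (prefix (Suc i) w) \<noteq> {}" for i
    using suffix_in_residual[OF assms(2)] by blast
  ultimately show ?thesis
    unfolding is_run_def using assms(1)
    by (simp add: trans_residual_dsa) (simp add: residual_dsa_def)
qed

lemma run_residual_dsa_states:
  assumes inj: "inj_on f (residual_states S)" and run: "is_run (residual_dsa f S) w r"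
  shows "r i = f (residual S (prefix i w)) \<and> residual S (prefix (Suc i) w) \<noteq> {}"
proof -
  let ?R = "\<lambda>i. residual S (prefix i w)"
  have step: "r (Suc i) = f (?R (Suc i)) \<and> ?R (Suc i) \<noteq> {}"
    if "r i = f (?R i)" "?R i \<in> residual_states S" for i
  proof -
    have "r (Suc i) \<in> trans (residual_dsa f S) (f (?R i)) (w i)"
      using run that(1) unfolding is_run_def by metis
    with inj that(2) show ?thesis
      by (simp add: trans_residual_dsa split: if_splits)
  qed
  have "r i = f (?R i) \<and> ?R i \<in> residual_states S" for i
  proof (induction i)
    case 0
    then show ?case
      using run by (simp add: is_run_def residual_dsa_def residual_states_def)
  next
    case (Suc i)
    then show ?case
      using step residual_in_residual_states by blast
  qed
  with step show ?thesis by blast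
qed

lemma accepting_run_residual_dsa: "accepting_run (residual_dsa f S) r"
  unfolding accepting_run_def residual_dsa_def by auto

lemma lang_residual_dsa:
  assumes inj: "inj_on f (residual_states S)" and "finite S" "S \<subseteq> omega_words \<Sigma>"
  shows "lang \<Sigma> (residual_dsa f S) = S"
proof
  show "S \<subseteq> lang \<Sigma> (residual_dsa f S)"
    using assms run_residual_dsa accepting_run_residual_dsa unfolding lang_def by blast
next
  show "lang \<Sigma> (residual_dsa f S) \<subseteq> S"
  proof
    fix w assume "w \<in> lang \<Sigma> (residual_dsa f S)"
    then obtain r where "is_run (residual_dsa f S) w r"
      unfolding lang_def by blast
    with inj have "residual S (prefix (Suc i) w) \<noteq> {}" for i
      using run_residual_dsa_states by blast
    then have "residual S (prefix i w) \<noteq> {}" for i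
      by (metis residual_append residual_empty subseq_to_Suc zero_le)
    with \<open>finite S\<close> show "w \<in> S"
      by (rule finite_word_set_closed)
  qed
qed

lemma ex_dsa_of_finite_word_set:
  assumes "finite S" "S \<subseteq> omega_words \<Sigma>" "finite (residual_states S)"
  shows "\<exists>A. wf_npa \<Sigma> A \<and> deterministic \<Sigma> A \<and> safety A \<and>
    size_npa A = card (residual_states S) \<and> lang \<Sigma> A = S"
proof -
  obtain f :: "(nat \<Rightarrow> 'a) set \<Rightarrow> nat" where "inj_on f (residual_states S)"
    using finite_imp_inj_to_nat_seg[OF assms(3)] by blast
  then show ?thesis
    using assms wf_residual_dsa deterministic_residual_dsa safety_residual_dsa
      size_residual_dsa lang_residual_dsa by blast
qed

lemma lasso_word_period:
  assumes "v \<noteq> []" "length u \<le> i"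
  shows "lasso_word u v (i + k * length v) = lasso_word u v i"
proof -
  have "i + k * length v - length u = (i - length u) + k * length v"
    using assms by simp
  then have "(i + k * length v - length u) mod length v = (i - length u) mod length v"
    by simp
  then show ?thesis
    using assms unfolding lasso_word_def by simp
qed

text \<open>Both words are periodic from position n on, with common period |v| * |v'| \<le> n * n.\<close>
lemma lasso_word_eqI:
  assumes "v \<noteq> []" "length u + length v \<le> n" "v' \<noteq> []" "length u' + length v' \<le> n"
    and agree: "\<forall>i < n + n * n. lasso_word u v i = lasso_word u' v' i"
  shows "lasso_word u v = lasso_word u' v'"
proof
  fix i
  define p where "p = length v * length v'"
  have "0 < p" "p \<le> n * n"
    unfolding p_def using assms by (auto intro: mult_le_mono)
  show "lasso_word u v i = lasso_word u' v' i"
  proof (induction i rule: less_induct)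
    case (less i)
    show ?case
    proof (cases "i < n + p")
      case True
      then show ?thesis using agree \<open>p \<le> n * n\<close> by auto
    next
      case False
      define j where "j = i - p"
      have j: "i = j + p" "n \<le> j"
        using False unfolding j_def by auto
      have "lasso_word u v i = lasso_word u v j"
        using lasso_word_period[of v u j "length v'"] assms j by (simp add: p_def mult.commute)
      also have "\<dots> = lasso_word u' v' j"
        using less \<open>0 < p\<close> j by simp
      also have "\<dots> = lasso_word u' v' i"
        using lasso_word_period[of v' u' j "length v"] assms j by (simp add: p_def)
      finally show ?thesis .
    qed
  qed
qed

lemma suffix_lasso_word:
  assumes "v \<noteq> []"
  shows "\<exists>j < length u + length v. suffix m (lasso_word u v) = suffix j (lasso_word u v)"
proof (cases "m < length u")
  case True
  then show ?thesis by (intro exI[of _ m]) auto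
next
  case False
  define j where "j = length u + (m - length u) mod length v"
  have "j < length u + length v"
    unfolding j_def using assms by simp
  moreover have "suffix m (lasso_word u v) = suffix j (lasso_word u v)"
  proof
    fix i
    have "(m + i - length u) mod length v = (j + i - length u) mod length v"
      unfolding j_def using False by (simp add: mod_simps)
    then show "suffix m (lasso_word u v) i = suffix j (lasso_word u v) i"
      unfolding j_def lasso_word_def using False by auto
  qed
  ultimately show ?thesis by blast
qed

definition lasso_words :: "'a set \<Rightarrow> nat \<Rightarrow> (nat \<Rightarrow> 'a) set" where
  "lasso_words \<Sigma> n = {lasso_word u v | u v. set u \<subseteq> \<Sigma> \<and> set v \<subseteq> \<Sigma> \<and> v \<noteq> [] \<and> length (u @ v) = n}"

lemma lasso_lang_eq: "lasso_lang \<Sigma> n \<psi> = lasso_words \<Sigma> n \<inter> \<psi>"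
  unfolding lasso_lang_def lasso_words_def by blast

lemma lasso_words_subset_image:
  "lasso_words \<Sigma> n \<subseteq>
    (\<lambda>(k, x). lasso_word (take k x) (drop k x)) ` ({..<n} \<times> {x. set x \<subseteq> \<Sigma> \<and> length x = n})"
proof
  fix w assume "w \<in> lasso_words \<Sigma> n"
  then obtain u v where "w = lasso_word u v" "set u \<subseteq> \<Sigma>" "set v \<subseteq> \<Sigma>" "v \<noteq> []"
      "length (u @ v) = n"
    unfolding lasso_words_def by blast
  then show "w \<in> (\<lambda>(k, x). lasso_word (take k x) (drop k x)) `
      ({..<n} \<times> {x. set x \<subseteq> \<Sigma> \<and> length x = n})"
    by (intro image_eqI[of _ _ "(length u, u @ v)"]) auto
qed

lemma finite_lasso_words: "finite \<Sigma> \<Longrightarrow> finite (lasso_words \<Sigma> n)"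
  by (rule finite_subset[OF lasso_words_subset_image]) (simp add: finite_lists_length_eq)

lemma card_lasso_words_le:
  assumes "finite \<Sigma>"
  shows "card (lasso_words \<Sigma> n) \<le> n * card \<Sigma> ^ n"
proof -
  let ?L = "{x. set x \<subseteq> \<Sigma> \<and> length x = n}"
  have fin: "finite ({..<n} \<times> ?L)"
    using assms by (simp add: finite_lists_length_eq)
  have "card (lasso_words \<Sigma> n) \<le> card ((\<lambda>(k, x). lasso_word (take k x) (drop k x)) ` ({..<n} \<times> ?L))"
    by (rule card_mono[OF finite_imageI[OF fin] lasso_words_subset_image])
  also have "\<dots> \<le> card ({..<n} \<times> ?L)"
    by (rule card_image_le[OF fin])
  also have "\<dots> = n * card \<Sigma> ^ n"
    using assms by (simp add: card_cartesian_product card_lists_length_eq)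
  finally show ?thesis .
qed

lemma residual_lasso_words_long:
  assumes S: "S \<subseteq> lasso_words \<Sigma> n" and "n + n * n \<le> length x" "residual S x \<noteq> {}"
  shows "\<exists>w\<in>S. \<exists>j<n. residual S x = {suffix j w}"
proof -
  have lasso: "\<exists>u v. w = lasso_word u v \<and> v \<noteq> [] \<and> length u + length v = n" if "w \<in> S" for w
    using subsetD[OF S that] unfolding lasso_words_def by auto
  obtain w where w: "w \<in> S" "prefix (length x) w = x"
    using assms(3) unfolding residual_def by blast
  have "w' = w" if w': "w' \<in> S" "prefix (length x) w' = x" for w'
  proof -
    have "prefix (length x) w' = prefix (length x) w"
      using w'(2) w(2) by simp
    then have "\<forall>i < n + n * n. w' i = w i"
      using assms(2) unfolding prefix_eq_iff by auto
    moreover obtain u v where "w = lasso_word u v" "v \<noteq> []" "length u + length v = n"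
      using lasso[OF w(1)] by blast
    moreover obtain u' v' where "w' = lasso_word u' v'" "v' \<noteq> []" "length u' + length v' = n"
      using lasso[OF w'(1)] by blast
    ultimately show ?thesis
      using lasso_word_eqI[of v' u' n v u] by simp
  qed
  then have "residual S x = {suffix (length x) w}"
    using w unfolding residual_def by blast
  moreover obtain j where "j < n" "suffix (length x) w = suffix j w"
    using lasso[OF w(1)] suffix_lasso_word by blast
  ultimately show ?thesis
    using w(1) by auto
qed

lemma residual_states_lasso_words_subset:
  assumes "S \<subseteq> lasso_words \<Sigma> n"
  shows "residual_states S \<subseteq> insert S
    ((\<lambda>(w, m). residual S (prefix m w)) ` (S \<times> {..<n + n * n}) \<union>
     (\<lambda>(w, j). {suffix j w}) ` (S \<times> {..<n}))"
    (is "_ \<subseteq> insert S (?short \<union> ?long)")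
proof
  fix R assume "R \<in> residual_states S"
  then consider "R = S" | x where "R = residual S x" "residual S x \<noteq> {}"
    unfolding residual_states_def by blast
  then show "R \<in> insert S (?short \<union> ?long)"
  proof cases
    case 1
    then show ?thesis by blast
  next
    case (2 x)
    show ?thesis
    proof (cases "length x < n + n * n")
      case True
      obtain w where "w \<in> S" "prefix (length x) w = x"
        using 2 unfolding residual_def by blast
      with True 2 have "R \<in> ?short"
        by (intro image_eqI[of _ _ "(w, length x)"]) auto
      then show ?thesis by blast
    next
      case False
      then obtain w j where "w \<in> S" "j < n" "R = {suffix j w}"
        using 2 residual_lasso_words_long[OF assms] by (metis not_less)
      then have "R \<in> ?long"
        by (intro image_eqI[of _ _ "(w, j)"]) auto
      then show ?thesis by blast
    qed
  qed
qed

lemma card_residual_states_lasso_words: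
  assumes "S \<subseteq> lasso_words \<Sigma> n" "finite S"
  shows "finite (residual_states S)" "card (residual_states S) \<le> 1 + card S * (n * n + 2 * n)"
proof -
  let ?I1 = "(\<lambda>(w, m). residual S (prefix m w)) ` (S \<times> {..<n + n * n})"
  let ?I2 = "(\<lambda>(w, j). {suffix j w}) ` (S \<times> {..<n})"
  have fin: "finite ?I1" "finite ?I2"
    using assms(2) by simp_all
  with residual_states_lasso_words_subset[OF assms(1)]
  show "finite (residual_states S)"
    by (meson finite_Un finite_insert finite_subset)
  have "card (residual_states S) \<le> card (insert S (?I1 \<union> ?I2))"
    using residual_states_lasso_words_subset[OF assms(1)] fin by (intro card_mono) auto
  also have "\<dots> \<le> Suc (card (?I1 \<union> ?I2))"
    using fin by (simp add: card_insert_if)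
  also have "\<dots> \<le> Suc (card ?I1 + card ?I2)"
    using card_Un_le by simp
  also have "card ?I1 \<le> card S * (n + n * n)"
    using card_image_le[of "S \<times> {..<n + n * n}"] assms(2) by (simp add: card_cartesian_product)
  also have "card ?I2 \<le> card S * n"
    using card_image_le[of "S \<times> {..<n}"] assms(2) by (simp add: card_cartesian_product)
  finally show "card (residual_states S) \<le> 1 + card S * (n * n + 2 * n)"
    by (simp add: algebra_simps)
qed

lemma ex_lasso_precise_dsa:
  assumes "finite \<Sigma>" "\<phi> \<subseteq> omega_words \<Sigma>"
  shows "\<exists>A. wf_npa \<Sigma> A \<and> deterministic \<Sigma> A \<and> safety A \<and>
    size_npa A \<le> 1 + n * card \<Sigma> ^ n * (n * n + 2 * n) \<and> lasso_precise_under \<Sigma> n (lang \<Sigma> A) \<phi>"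
proof -
  define S where "S = lasso_words \<Sigma> n \<inter> \<phi>"
  have S: "S \<subseteq> lasso_words \<Sigma> n" "finite S"
    using finite_lasso_words[OF assms(1)] unfolding S_def by auto
  have "S \<subseteq> omega_words \<Sigma>"
    using assms(2) unfolding S_def by blast
  then obtain A where "wf_npa \<Sigma> A" "deterministic \<Sigma> A" "safety A"
      "size_npa A = card (residual_states S)" "lang \<Sigma> A = S"
    using ex_dsa_of_finite_word_set S card_residual_states_lasso_words(1)[OF S] by blast
  moreover have "card S \<le> n * card \<Sigma> ^ n"
    using card_mono[OF finite_lasso_words[OF assms(1)] S(1)] card_lasso_words_le[OF assms(1)]
    by (rule order_trans)
  then have "card (residual_states S) \<le> 1 + n * card \<Sigma> ^ n * (n * n + 2 * n)"
    using card_residual_states_lasso_words(2)[OF S] mult_le_mono1 by (meson add_le_mono order_trans le_refl)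
  moreover have "lasso_precise_under \<Sigma> n S \<phi>"
    unfolding lasso_precise_under_def lasso_lang_eq S_def by blast
  ultimately show ?thesis
    by auto
qed

lemma cubic_le_pow_self: "1 + n * n * n + 2 * (n * n) \<le> 8 * n ^ n"
proof -
  consider "n \<le> 2" | "3 \<le> n" by linarith
  then show ?thesis
  proof cases
    case 1
    then consider "n = 0" | "n = 1" | "n = 2" by linarith
    then show ?thesis by cases simp_all
  next
    case 2
    have "n ^ 3 \<le> n ^ n"
      using 2 by (intro power_increasing) auto
    then have "n * n * n \<le> n ^ n"
      by (simp add: power3_eq_cube)
    moreover have "1 \<le> n * n * n" "n * n \<le> n * n * n"
      using 2 by simp_all
    ultimately show ?thesis
      by linarith
  qed
qed

lemma two_powr_n_log_n: "2 powr (real n * log 2 (real n)) = real n ^ n"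
proof (cases "n = 0")
  case False
  then have "2 powr (real n * log 2 (real n)) = (2 powr log 2 (real n)) powr real n"
    by (simp only: powr_powr mult.commute)
  also have "\<dots> = real n ^ n"
    using False by (simp add: powr_realpow)
  finally show ?thesis .
qed simp

theorem theorem1:
  "\<exists>c :: real. c > 0 \<and>
     (\<forall>(\<Sigma> :: 'a set) (\<phi> :: (nat \<Rightarrow> 'a) set) (n :: nat).
        finite \<Sigma> \<and> \<Sigma> \<noteq> {} \<and> \<phi> \<subseteq> omega_words \<Sigma> \<longrightarrow>
        (\<exists>A :: 'a npa. wf_npa \<Sigma> A \<and> deterministic \<Sigma> A \<and> safety A \<and>
           real (size_npa A) \<le> c * real (card \<Sigma>) ^ n * 2 powr (real n * log 2 (real n)) \<and>
           lasso_precise_under \<Sigma> n (lang \<Sigma> A) \<phi>))"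
proof (intro exI[of _ 8] conjI allI impI)
  fix \<Sigma> :: "'a set" and \<phi> :: "(nat \<Rightarrow> 'a) set" and n :: nat
  assume H: "finite \<Sigma> \<and> \<Sigma> \<noteq> {} \<and> \<phi> \<subseteq> omega_words \<Sigma>"
  then obtain A :: "'a npa" where A: "wf_npa \<Sigma> A" "deterministic \<Sigma> A" "safety A"
      "lasso_precise_under \<Sigma> n (lang \<Sigma> A) \<phi>"
      and size: "size_npa A \<le> 1 + n * card \<Sigma> ^ n * (n * n + 2 * n)"
    using ex_lasso_precise_dsa by blast
  have "1 \<le> card \<Sigma> ^ n"
    using H by (simp add: Suc_le_eq card_gt_0_iff)
  then have "size_npa A \<le> card \<Sigma> ^ n * (1 + n * n * n + 2 * (n * n))"
    using size by (simp add: algebra_simps)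
  also have "\<dots> \<le> card \<Sigma> ^ n * (8 * n ^ n)"
    by (rule mult_le_mono2[OF cubic_le_pow_self])
  finally have "real (size_npa A) \<le> real (card \<Sigma> ^ n * (8 * n ^ n))"
    by (simp only: of_nat_le_iff)
  then have "real (size_npa A) \<le> 8 * real (card \<Sigma>) ^ n * real n ^ n"
    by (simp add: mult_ac)
  with A show "\<exists>A :: 'a npa. wf_npa \<Sigma> A \<and> deterministic \<Sigma> A \<and> safety A \<and>
      real (size_npa A) \<le> 8 * real (card \<Sigma>) ^ n * 2 powr (real n * log 2 (real n)) \<and>
      lasso_precise_under \<Sigma> n (lang \<Sigma> A) \<phi>"
    unfolding two_powr_n_log_n by blast
qed simp

end
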